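(* In the homogeneous UAV Persistent Service model ($g_i=g$ for all $i$, $2g<f$), run HoRR with $M=N+\lceil \frac{c+2g}{f-2g}N\rceil$ UAVs and let $x=\frac{f-2g}{N}$. Label the locations $1,\dots,N$ so that the UAV placed at location $i$ at time $0$ is the one relieved at time $ix$. Then, for every $k\ge 1$, the UAV initially placed at location $i$ is instructed to go recharge for the $k$-th time at time $$t_i^k=\left(i+(k-1)N+(k-1)\left\lceil\frac{2g+c}{x}\right\rceil\right)x .$$
   Context: UAV Persistent Service model: single recharging station (RS), finite set $\mathcal N$ of $N$ aerial locations, identical UAVs with maximum flight time $f>0$ on a full battery and recharge/battery-swap time $c\ge0$ at the RS; flying between RS and any location takes $g>0$ time units (homogeneous case), with $2g<f$. A UAV covers a location while it is present there. HoRR schedule: with $x=\frac{f-2g}{N}$, at time $0$ one fully charged UAV is at each location and the remaining (backup) UAVs are fully charged at the RS. For each $k=1,2,\dots$, a fully charged backup departs the RS at time $kx-g$ and at time $kx$ replaces the serving UAV with least remaining energy (ties broken arbitrarily); the relieved UAV ("instructed to recharge" at time $kx$) flies back to the RS (arriving at $kx+g$), recharges for $c$ time units, and then becomes a backup. Backups are dispatched in the order in which they became ready, so a UAV ready at the RS at time $s$ performs the first replacement at a time $jx$ ($j\in\mathbb N$) with $jx\ge s+g$ not already assigned to an earlier-ready backup. *)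

theory Defs
  imports Main Complex_Main
begin

text \<open>
  UAVs are the naturals 0..<M; UAVs 0..<N are the ones initially serving at the
  N locations (fully charged at time 0), UAVs N..<M are the initial backups
  (fully charged at the RS).  Replacement slot j (j >= 1) happens at time j*x,
  x = (f - 2g)/N.  A run is described by two functions:
  rel j  = the UAV relieved (instructed to recharge) at time j*x,
  disp j = the backup that replaces it at time j*x (departing the RS at j*x - g).
\<close>

definition hx :: "nat \<Rightarrow> real \<Rightarrow> real \<Rightarrow> real" where
  "hx N f g = (f - 2 * g) / real N"

text \<open>Serving UAVs after the replacements at slots 1..j (so before slot j+1).\<close>
fun srv :: "nat \<Rightarrow> (nat \<Rightarrow> nat) \<Rightarrow> (nat \<Rightarrow> nat) \<Rightarrow> nat \<Rightarrow> nat set" where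
  "srv N rel disp 0 = {0..<N}"
| "srv N rel disp (Suc j) = insert (disp (Suc j)) (srv N rel disp j - {rel (Suc j)})"

text \<open>Remaining energy at time j*x of a UAV that is serving just before slot j:
  a UAV last placed at slot m arrived with energy f - g at time m*x;
  an initially serving UAV that was never dispatched had energy f at time 0.\<close>
definition energy :: "real \<Rightarrow> real \<Rightarrow> real \<Rightarrow> (nat \<Rightarrow> nat) \<Rightarrow> nat \<Rightarrow> nat \<Rightarrow> real" where
  "energy f g x disp j u =
     (let D = {m. 1 \<le> m \<and> m < j \<and> disp m = u} in
      if D = {} then f - real j * x
      else f - g - real (j - Max D) * x)"

text \<open>Time at which a UAV at the RS (just before slot j) is fully recharged and ready:
  None encodes the initial backups, which are ready from the start (earlier than any
  recharged UAV); a UAV last relieved at slot r is ready at r*x + g + c.\<close>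
definition ready :: "real \<Rightarrow> real \<Rightarrow> real \<Rightarrow> (nat \<Rightarrow> nat) \<Rightarrow> nat \<Rightarrow> nat \<Rightarrow> real option" where
  "ready g c x rel j u =
     (let R = {r. 1 \<le> r \<and> r < j \<and> rel r = u} in
      if R = {} then None else Some (real (Max R) * x + g + c))"

definition ready_le :: "real option \<Rightarrow> real option \<Rightarrow> bool" where
  "ready_le a b = (case a of None \<Rightarrow> True
                   | Some s \<Rightarrow> (case b of None \<Rightarrow> False | Some s' \<Rightarrow> s \<le> s'))"

definition avail :: "nat \<Rightarrow> nat \<Rightarrow> real \<Rightarrow> real \<Rightarrow> real \<Rightarrow> (nat \<Rightarrow> nat) \<Rightarrow> (nat \<Rightarrow> nat) \<Rightarrow> nat \<Rightarrow> nat \<Rightarrow> bool" where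
  "avail N M g c x rel disp j u \<longleftrightarrow>
     u < M \<and> u \<notin> srv N rel disp (j - 1) \<and>
     (case ready g c x rel j u of None \<Rightarrow> True | Some s \<Rightarrow> s + g \<le> real j * x)"

text \<open>A run of HoRR with M UAVs (ties broken arbitrarily): at each slot j >= 1 the
  serving UAV with least remaining energy is relieved, and it is replaced by the
  earliest-ready eligible backup (backups dispatched in order of readiness).\<close>
definition horr_run :: "nat \<Rightarrow> nat \<Rightarrow> real \<Rightarrow> real \<Rightarrow> real \<Rightarrow> (nat \<Rightarrow> nat) \<Rightarrow> (nat \<Rightarrow> nat) \<Rightarrow> bool" where
  "horr_run N M f g c rel disp \<longleftrightarrow>
     (let x = hx N f g in
      \<forall>j\<ge>1.
        rel j \<in> srv N rel disp (j - 1) \<and>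
        (\<forall>v\<in>srv N rel disp (j - 1). energy f g x disp j (rel j) \<le> energy f g x disp j v) \<and>
        avail N M g c x rel disp j (disp j) \<and>
        (\<forall>v. avail N M g c x rel disp j v \<longrightarrow>
              ready_le (ready g c x rel j (disp j)) (ready g c x rel j v)))"

end

theory Submission
  imports Defs
begin

text \<open>
  Let L = \<lceil>(2g + c)/x\<rceil> and P = N + L. Call due r the UAV relieved at slot r: the
  initially placed UAV rel r for r \<le> N, and the backup dispatched at slot r - N
  otherwise. By induction on the slot, the serving UAVs are always the values of due
  on the next N slots, and due is P-periodic with any P consecutive values distinct.
  The serving UAVs were dispatched at consecutive slots, so least energy means the
  one dispatched N slots ago. A UAV relieved at slot r is ready for redispatch only at
  slot r + L, and the UAVs serving or relieved within the last L - 1 slots are N + L - 1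
  distinct ones; so of the P UAVs the one dispatched at slot s > L can only be
  due (s - L). Hence rel i is relieved exactly at the slots i + (k - 1) P.
\<close>

lemma periodic_iterate:
  fixes u :: "nat \<Rightarrow> 'a"
  assumes "\<And>r. 1 \<le> r \<Longrightarrow> u (r + P) = u r" "1 \<le> r"
  shows "u (r + l * P) = u r"
proof (induction l)
  case (Suc l)
  have "u (r + Suc l * P) = u (r + l * P + P)" by (simp add: algebra_simps)
  also have "\<dots> = u (r + l * P)" using assms by simp
  finally show ?case using Suc by simp
qed simp

lemma periodic_occurrences:
  fixes u :: "nat \<Rightarrow> 'a"
  assumes periodic: "\<And>r. 1 \<le> r \<Longrightarrow> u (r + P) = u r"
    and inj: "inj_on u {1..P}" and i: "i \<in> {1..P}"
  shows "{j. 1 \<le> j \<and> j < i + n * P \<and> u j = u i} = (\<lambda>l. i + l * P) ` {..<n}"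
proof
  show "{j. 1 \<le> j \<and> j < i + n * P \<and> u j = u i} \<subseteq> (\<lambda>l. i + l * P) ` {..<n}"
  proof safe
    fix j assume j: "1 \<le> j" "j < i + n * P" "u j = u i"
    define i' where "i' = (j - 1) mod P + 1"
    define l where "l = (j - 1) div P"
    have P: "0 < P" using i by simp
    have j_split: "j = i' + l * P"
      using j(1) div_mult_mod_eq[of "j - 1" P] unfolding i'_def l_def by simp
    have "i' \<in> {1..P}" using P unfolding i'_def by (simp add: Suc_le_eq)
    moreover have "u i' = u i"
      using j(3) periodic_iterate[where u=u, OF periodic, of i' l] j_split unfolding i'_def by simp
    ultimately have "i' = i" using inj i by (simp add: inj_on_eq_iff)
    then have "l < n" using j(2) j_split by simp
    then show "j \<in> (\<lambda>l. i + l * P) ` {..<n}" using j_split \<open>i' = i\<close> by blast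
  qed
  show "(\<lambda>l. i + l * P) ` {..<n} \<subseteq> {j. 1 \<le> j \<and> j < i + n * P \<and> u j = u i}"
    using i periodic_iterate[where u=u, OF periodic] by auto
qed

lemma card_periodic_occurrences:
  fixes u :: "nat \<Rightarrow> 'a"
  assumes "\<And>r. 1 \<le> r \<Longrightarrow> u (r + P) = u r" "inj_on u {1..P}" "i \<in> {1..P}"
  shows "card {j. 1 \<le> j \<and> j < i + n * P \<and> u j = u i} = n"
proof -
  have "inj_on (\<lambda>l. i + l * P) {..<n}" using assms(3) by (intro inj_onI) simp
  then show ?thesis using periodic_occurrences[where u=u, OF assms, of n] by (simp add: card_image)
qed

lemma inj_on_image_eq_lessThan:
  assumes "inj_on u A" "u ` A \<subseteq> {..<n}" "card A = n"
  shows "u ` A = {..<n}"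
  using assms by (intro card_subset_eq) (simp_all add: card_image)

locale horr_schedule =
  fixes N L :: nat and f g c :: real and rel disp :: "nat \<Rightarrow> nat"
  assumes N_pos: "1 \<le> N"
    and flight_slack: "2 * g < f"
    and backups: "int L = \<lceil>(2 * g + c) / hx N f g\<rceil>"
    and run: "horr_run N (N + L) f g c rel disp"
    and label_inj: "inj_on rel {1..N}"
    and label_range: "rel ` {1..N} \<subseteq> {..<N}"
begin

abbreviation "x \<equiv> hx N f g"

abbreviation "P \<equiv> N + L"

lemma x_pos: "0 < x"
  using flight_slack N_pos by (simp add: hx_def)

lemma recharge_gap_iff: "2 * g + c \<le> real d * x \<longleftrightarrow> L \<le> d"
proof -
  have "2 * g + c \<le> real d * x \<longleftrightarrow> (2 * g + c) / x \<le> real d"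
    using x_pos by (simp add: field_simps)
  also have "\<dots> \<longleftrightarrow> \<lceil>(2 * g + c) / x\<rceil> \<le> int d" by (simp add: ceiling_le_iff)
  finally show ?thesis by (simp flip: backups)
qed

lemma run_slot:
  assumes "1 \<le> j"
  shows "rel j \<in> srv N rel disp (j - 1)"
    and "\<forall>v\<in>srv N rel disp (j - 1). energy f g x disp j (rel j) \<le> energy f g x disp j v"
    and "avail N P g c x rel disp j (disp j)"
  using run assms unfolding horr_run_def Let_def by auto

lemma dispatched_lt: "1 \<le> j \<Longrightarrow> disp j < P"
  using run_slot(3) by (simp add: avail_def)

lemma dispatched_not_serving: "1 \<le> j \<Longrightarrow> disp j \<notin> srv N rel disp (j - 1)"
  using run_slot(3) by (simp add: avail_def)

lemma redispatch_gap:
  assumes r: "1 \<le> r" "r < s" and same: "rel r = disp s"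
  shows "r + L \<le> s"
proof -
  define R where "R = {r. 1 \<le> r \<and> r < s \<and> rel r = disp s}"
  have "finite R" unfolding R_def by (rule finite_subset[of _ "{..<s}"]) auto
  moreover have "r \<in> R" using assms unfolding R_def by simp
  ultimately have r_le: "r \<le> Max R" and last: "Max R \<in> R" by (auto intro: Max_in)
  have "ready g c x rel s (disp s) = Some (real (Max R) * x + g + c)"
    using \<open>r \<in> R\<close> unfolding ready_def Let_def R_def[symmetric] by auto
  then have "real (Max R) * x + g + c + g \<le> real s * x"
    using run_slot(3)[of s] r by (simp add: avail_def)
  then have "2 * g + c \<le> real (s - Max R) * x"
    using last by (simp add: R_def of_nat_diff algebra_simps)
  then show ?thesis using recharge_gap_iff r_le last unfolding R_def by force
qed

definition due :: "nat \<Rightarrow> nat" where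
  "due r = (if r \<le> N then rel r else disp (r - N))"

lemma due_add_N: "1 \<le> m \<Longrightarrow> due (m + N) = disp m"
  by (simp add: due_def)

lemma due_lt: "1 \<le> r \<Longrightarrow> due r < P"
  using label_range dispatched_lt[of "r - N"] by (force simp: due_def)

definition schedule_inv :: "nat \<Rightarrow> bool" where
  "schedule_inv j \<longleftrightarrow>
     (\<forall>r. 1 \<le> r \<longrightarrow> r \<le> j \<longrightarrow> rel r = due r) \<and>
     srv N rel disp j = due ` {Suc j..j + N} \<and>
     (\<forall>r. 1 \<le> r \<longrightarrow> r + P \<le> j + N \<longrightarrow> due (r + P) = due r) \<and>
     (\<forall>a b. 1 \<le> a \<longrightarrow> a < b \<longrightarrow> b \<le> j + N \<longrightarrow> b < a + P \<longrightarrow> due a \<noteq> due b)"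

lemma schedule_inv_0: "schedule_inv 0"
proof -
  have "rel ` {1..N} = {..<N}"
    using label_inj label_range by (intro inj_on_image_eq_lessThan) auto
  moreover have "due ` {1..N} = rel ` {1..N}" by (simp add: due_def)
  moreover have "due a \<noteq> due b" if "1 \<le> a" "a < b" "b \<le> N" for a b
    using that inj_on_eq_iff[OF label_inj, of a b] by (simp add: due_def)
  ultimately show ?thesis
    unfolding schedule_inv_def by (auto simp: atLeast0LessThan)
qed

context
  fixes j assumes inv: "schedule_inv j"
begin

lemma inv_rel: "1 \<le> r \<Longrightarrow> r \<le> j \<Longrightarrow> rel r = due r"
  and inv_srv: "srv N rel disp j = due ` {Suc j..j + N}"
  and inv_periodic: "1 \<le> r \<Longrightarrow> r + P \<le> j + N \<Longrightarrow> due (r + P) = due r"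
  and inv_distinct: "1 \<le> a \<Longrightarrow> a < b \<Longrightarrow> b \<le> j + N \<Longrightarrow> b < a + P \<Longrightarrow> due a \<noteq> due b"
  using inv unfolding schedule_inv_def by blast+

lemma energy_due:
  assumes "N < Suc j" "r \<in> {Suc j..j + N}"
  shows "energy f g x disp (Suc j) (due r) = f - g - real (Suc j + N - r) * x"
proof -
  define D where "D = {m. 1 \<le> m \<and> m < Suc j \<and> disp m = due r}"
  have last_dispatch: "r - N \<in> D"
    using assms due_add_N[of "r - N"] unfolding D_def by auto
  have "m \<le> r - N" if "m \<in> D" for m
  proof (rule ccontr)
    assume "\<not> m \<le> r - N"
    then have "due r \<noteq> due (m + N)"
      using that assms by (intro inv_distinct) (auto simp: D_def)
    then show False using that due_add_N[of m] by (simp add: D_def)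
  qed
  moreover have "finite D" unfolding D_def by (rule finite_subset[of _ "{..<Suc j}"]) auto
  ultimately have "Max D = r - N" using last_dispatch by (intro Max_eqI) auto
  then show ?thesis
    using last_dispatch assms
    unfolding energy_def Let_def D_def[symmetric] by (auto simp: of_nat_diff)
qed

lemma relieved_due: "rel (Suc j) = due (Suc j)"
proof (cases "Suc j \<le> N")
  case True
  then show ?thesis by (simp add: due_def)
next
  case False
  obtain r where r: "r \<in> {Suc j..j + N}" "rel (Suc j) = due r"
    using run_slot(1)[of "Suc j"] inv_srv by auto
  have "Suc j \<in> {Suc j..j + N}" using N_pos by simp
  then have "energy f g x disp (Suc j) (rel (Suc j)) \<le> energy f g x disp (Suc j) (due (Suc j))"
    using run_slot(2)[of "Suc j"] inv_srv by auto
  then have "real N * x \<le> real (Suc j + N - r) * x"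
    using r False energy_due by simp
  then have "N \<le> Suc j + N - r" using x_pos by simp
  moreover have "Suc j \<le> r" "r \<le> j + N" using r(1) by simp_all
  ultimately have "r \<le> Suc j" by arith
  then show ?thesis using r by simp
qed

lemma dispatched_fresh:
  assumes "1 \<le> a" "Suc j < a + L" "a < Suc j + N"
  shows "due a \<noteq> disp (Suc j)"
proof
  assume same: "due a = disp (Suc j)"
  show False
  proof (cases "a \<le> j")
    case True
    then show False
      using redispatch_gap[of a "Suc j"] inv_rel[of a] same assms by simp
  next
    case False
    then have "a \<in> {Suc j..j + N}" using assms by simp
    then have "disp (Suc j) \<in> due ` {Suc j..j + N}" using same by (metis image_eqI)
    then show False using dispatched_not_serving[of "Suc j"] inv_srv by simp
  qed
qed

lemma dispatched_periodic:
  assumes "L < Suc j"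
  shows "due (Suc j + N) = due (Suc j - L)"
proof -
  define A where "A = {Suc j - L..<Suc j + N}"
  have start: "1 \<le> Suc j - L" "Suc j - L + L = Suc j" using assms by simp_all
  have "inj_on due A"
  proof (rule linorder_inj_onI')
    fix a b assume "a \<in> A" "b \<in> A" "a < b"
    then have "1 \<le> a" "b \<le> j + N" "b < a + P"
      using start unfolding A_def atLeastLessThan_iff by linarith+
    then show "due a \<noteq> due b" using \<open>a < b\<close> by (intro inv_distinct)
  qed
  moreover have "due ` A \<subseteq> {..<P}"
    using start due_lt unfolding A_def by (meson atLeastLessThan_iff image_subsetI le_trans lessThan_iff)
  moreover have "card A = P" using assms by (simp add: A_def)
  ultimately have "due ` A = {..<P}" by (rule inj_on_image_eq_lessThan)
  then have "disp (Suc j) \<in> due ` A" using dispatched_lt[of "Suc j"] by simp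
  then obtain a where a: "a \<in> A" "due a = disp (Suc j)" by (metis imageE)
  have "a = Suc j - L"
  proof (rule ccontr)
    assume "a \<noteq> Suc j - L"
    then have "1 \<le> a" "Suc j < a + L" "a < Suc j + N"
      using a(1) start unfolding A_def atLeastLessThan_iff by linarith+
    then show False using dispatched_fresh a(2) by blast
  qed
  then show ?thesis using a(2) due_add_N[of "Suc j"] by simp
qed

lemma serving_Suc: "srv N rel disp (Suc j) = due ` {Suc (Suc j)..Suc j + N}"
proof -
  have "due (Suc j) \<noteq> due b" if "b \<in> {Suc (Suc j)..j + N}" for b
    using that by (intro inv_distinct) auto
  then have "due (Suc j) \<notin> due ` {Suc (Suc j)..j + N}" by blast
  moreover have "{Suc j..j + N} = insert (Suc j) {Suc (Suc j)..j + N}"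
    and "{Suc (Suc j)..Suc j + N} = insert (Suc j + N) {Suc (Suc j)..j + N}"
    using N_pos by auto
  ultimately show ?thesis
    using inv_srv relieved_due due_add_N[of "Suc j"] by (simp add: Diff_insert_absorb)
qed

lemma schedule_inv_Suc: "schedule_inv (Suc j)"
  unfolding schedule_inv_def
proof (intro conjI allI impI)
  show "rel r = due r" if "1 \<le> r" "r \<le> Suc j" for r
    using that inv_rel relieved_due le_Suc_eq by auto
  show "srv N rel disp (Suc j) = due ` {Suc (Suc j)..Suc j + N}" by (rule serving_Suc)
  show "due (r + P) = due r" if "1 \<le> r" "r + P \<le> Suc j + N" for r
  proof (cases "r + P \<le> j + N")
    case True
    then show ?thesis using that inv_periodic by simp
  next
    case False
    then have "r = Suc j - L" "L < Suc j" using that by auto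
    then show ?thesis using dispatched_periodic by (simp add: add.assoc)
  qed
  show "due a \<noteq> due b" if "1 \<le> a" "a < b" "b \<le> Suc j + N" "b < a + P" for a b
  proof (cases "b \<le> j + N")
    case True
    then show ?thesis using that inv_distinct by simp
  next
    case False
    then have "b = Suc j + N" using that by simp
    then show ?thesis using that dispatched_fresh[of a] due_add_N[of "Suc j"] by simp
  qed
qed

end

lemma schedule_inv: "schedule_inv j"
  by (induction j) (simp_all add: schedule_inv_0 schedule_inv_Suc)

lemma rel_periodic: "1 \<le> r \<Longrightarrow> rel (r + P) = rel r"
  using inv_periodic[OF schedule_inv, where j = "r + L"] inv_rel[OF schedule_inv, of r r]
    inv_rel[OF schedule_inv, of "r + P" "r + P"] by simp

lemma rel_inj_on: "inj_on rel {1..P}"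
proof (rule inj_onI, rule ccontr)
  fix a b assume ab: "a \<in> {1..P}" "b \<in> {1..P}" "rel a = rel b" "a \<noteq> b"
  have "rel a = due a" "rel b = due b" using inv_rel[OF schedule_inv] ab by auto
  then show False
    using ab inv_distinct[OF schedule_inv, of a b L] inv_distinct[OF schedule_inv, of b a L]
    by (auto simp: linorder_neq_iff)
qed

theorem relief_times:
  assumes "i \<in> {1..N}"
  shows "rel (i + n * P) = rel i"
    and "card {j. 1 \<le> j \<and> j < i + n * P \<and> rel j = rel i} = n"
  using assms periodic_iterate[where u=rel, OF rel_periodic]
    card_periodic_occurrences[where u=rel, OF rel_periodic rel_inj_on] by auto

end

theorem lemma1:
  fixes N M :: nat and f g c x :: real and rel disp :: "nat \<Rightarrow> nat"
  assumes hN: "N \<ge> 1"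
    and hg: "g > 0" and hf: "f > 0" and hc: "c \<ge> 0" and hfg: "2 * g < f"
    and hM: "M = N + nat \<lceil>(c + 2 * g) / (f - 2 * g) * real N\<rceil>"
    and hx: "x = (f - 2 * g) / real N"
    and run: "horr_run N M f g c rel disp"
    and label: "inj_on rel {1..N}" "\<forall>i\<in>{1..N}. rel i \<in> {0..<N}"
  shows "\<forall>i\<in>{1..N}. \<forall>k\<ge>1. \<exists>T::nat. T \<ge> 1 \<and> rel T = rel i \<and>
           card {j. 1 \<le> j \<and> j < T \<and> rel j = rel i} = k - 1 \<and>
           real T * x = (real i + real (k - 1) * real N
                         + real (k - 1) * of_int \<lceil>(2 * g + c) / x\<rceil>) * x"
proof -
  define L where "L = nat \<lceil>(2 * g + c) / x\<rceil>"
  have "(c + 2 * g) / (f - 2 * g) * real N = (2 * g + c) / x"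
    unfolding hx using hfg hN by (simp add: field_simps)
  moreover have "0 \<le> (2 * g + c) / x" using hx hfg hg hc by simp
  ultimately have M: "M = N + L" and L: "int L = \<lceil>(2 * g + c) / x\<rceil>"
    using hM unfolding L_def by simp_all
  interpret horr_schedule N L f g c rel disp
    using hN hfg L run label by unfold_locales (auto simp: M hx hx_def)
  show ?thesis
  proof (intro ballI allI impI exI conjI)
    fix i k :: nat assume "i \<in> {1..N}" "1 \<le> k"
    show "1 \<le> i + (k - 1) * P" using \<open>i \<in> {1..N}\<close> by simp
    show "rel (i + (k - 1) * P) = rel i" "card {j. 1 \<le> j \<and> j < i + (k - 1) * P \<and> rel j = rel i} = k - 1"
      using relief_times \<open>i \<in> {1..N}\<close> by blast+
    show "real (i + (k - 1) * P) * x = (real i + real (k - 1) * real N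
        + real (k - 1) * of_int \<lceil>(2 * g + c) / x\<rceil>) * x"
    proof -
      have "of_int \<lceil>(2 * g + c) / x\<rceil> = real L" by (simp flip: L)
      then show ?thesis by (simp add: distrib_left distrib_right)
    qed
  qed
qed

end
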